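(* For every natural number $n\ge1$ and every balanced $\mathrm{HS}$ formula $\psi$ over $\{p\}$ with $|\psi|\le n$, $K_n\models_{\mathsf{st}}\psi$ if and only if $M_n\models_{\mathsf{st}}\psi$.
   Context: A Kripke structure over $\{p\}$ is $K=(\{p\},S,\delta,\mu,s_0)$ with states $S$, left-total $\delta\subseteq S\times S$, labelling $\mu:S\to2^{\{p\}}$, initial state $s_0$. A trace is a non-empty finite prefix of an infinite state sequence following $\delta$; initial if it starts at the initial state. For a finite word $w=w(0)\cdots w(n)$, $\mathrm{Pref}(w)=\{w[0,i]\mid0\le i\le n-1\}$, $\mathrm{Suff}(w)=\{w[i,n]\mid1\le i\le n\}$. For $n\ge1$: $S_n=\{s_0,s_1,\dots,s_{2n},t\}$, $\delta_n=\{(s_0,s_0),(s_0,s_1),(s_1,s_2),\dots,(s_{2n-1},s_{2n}),(s_{2n},t),(t,t)\}$, $\mu_n(s_i)=\emptyset$ for $0\le i\le 2n$, $\mu_n(t)=\{p\}$; $K_n=(\{p\},S_n,\delta_n,\mu_n,s_0)$ and $M_n=(\{p\},S_n,\delta_n,\mu_n,s_1)$ (they differ only in the initial state). $\mathrm{HS}$ formulas here are built from $p$, $\neg$, $\wedge$ and the primitive modalities $\langle B\rangle,\langle E\rangle,\langle\bar B\rangle,\langle\bar E\rangle$ (all other $\mathrm{HS}$ modalities being abbreviations); $|\psi|$ is the size of $\psi$ (its number of symbols/subformulas). $\psi$ is balanced if for each subformula $\langle B\rangle\theta$ or $\langle\bar B\rangle\theta$, $\theta$ has the form $\theta_1\wedge\theta_2$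 with $|\theta_1|=|\theta_2|$. State-based semantics over traces of $K$: $\rho\models p$ iff $p\in\mu(s)$ for every state $s$ of $\rho$; $\rho\models\langle B\rangle\psi$ iff some $\rho'\in\mathrm{Pref}(\rho)$ satisfies $\psi$; $\langle E\rangle\psi$: some $\rho'\in\mathrm{Suff}(\rho)$; $\langle\bar B\rangle\psi$: some trace $\rho'$ with $\rho\in\mathrm{Pref}(\rho')$; $\langle\bar E\rangle\psi$: some trace $\rho'$ with $\rho\in\mathrm{Suff}(\rho')$; Booleans as usual. $K\models_{\mathsf{st}}\psi$ iff every initial trace of $K$ satisfies $\psi$. *)

theory Defs
  imports Main
begin

datatype AP = P

record 's kripke =
  states :: "'s set"
  trans  :: "('s \<times> 's) set"
  lab    :: "'s \<Rightarrow> AP set"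
  init   :: 's

datatype hs =
    Prop
  | Neg hs
  | Conj hs hs
  | DiaB hs
  | DiaE hs
  | DiaBbar hs
  | DiaEbar hs

fun hs_size :: "hs \<Rightarrow> nat" where
  "hs_size Prop = 1"
| "hs_size (Neg f) = 1 + hs_size f"
| "hs_size (Conj f g) = 1 + hs_size f + hs_size g"
| "hs_size (DiaB f) = 1 + hs_size f"
| "hs_size (DiaE f) = 1 + hs_size f"
| "hs_size (DiaBbar f) = 1 + hs_size f"
| "hs_size (DiaEbar f) = 1 + hs_size f"

fun balanced :: "hs \<Rightarrow> bool" where
  "balanced Prop = True"
| "balanced (Neg f) = balanced f"
| "balanced (Conj f g) = (balanced f \<and> balanced g)"
| "balanced (DiaB f) = (balanced f \<and> (\<exists>a b. f = Conj a b \<and> hs_size a = hs_size b))"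
| "balanced (DiaE f) = balanced f"
| "balanced (DiaBbar f) = (balanced f \<and> (\<exists>a b. f = Conj a b \<and> hs_size a = hs_size b))"
| "balanced (DiaEbar f) = balanced f"

definition is_trace :: "'s kripke \<Rightarrow> 's list \<Rightarrow> bool" where
  "is_trace K \<rho> \<longleftrightarrow> \<rho> \<noteq> [] \<and>
     (\<exists>f. (\<forall>i. f i \<in> states K \<and> (f i, f (Suc i)) \<in> trans K) \<and> \<rho> = map f [0..<length \<rho>])"

definition is_init_trace :: "'s kripke \<Rightarrow> 's list \<Rightarrow> bool" where
  "is_init_trace K \<rho> \<longleftrightarrow> is_trace K \<rho> \<and> hd \<rho> = init K"

definition Pref :: "'s list \<Rightarrow> 's list set" where
  "Pref w = {take (Suc i) w | i. i < length w - 1}"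

definition Suff :: "'s list \<Rightarrow> 's list set" where
  "Suff w = {drop i w | i. 1 \<le> i \<and> i < length w}"

fun sat :: "'s kripke \<Rightarrow> 's list \<Rightarrow> hs \<Rightarrow> bool" where
  "sat K \<rho> Prop = (\<forall>s\<in>set \<rho>. P \<in> lab K s)"
| "sat K \<rho> (Neg f) = (\<not> sat K \<rho> f)"
| "sat K \<rho> (Conj f g) = (sat K \<rho> f \<and> sat K \<rho> g)"
| "sat K \<rho> (DiaB f) = (\<exists>\<rho>'\<in>Pref \<rho>. sat K \<rho>' f)"
| "sat K \<rho> (DiaE f) = (\<exists>\<rho>'\<in>Suff \<rho>. sat K \<rho>' f)"
| "sat K \<rho> (DiaBbar f) = (\<exists>\<rho>'. is_trace K \<rho>' \<and> \<rho> \<in> Pref \<rho>' \<and> sat K \<rho>' f)"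
| "sat K \<rho> (DiaEbar f) = (\<exists>\<rho>'. is_trace K \<rho>' \<and> \<rho> \<in> Suff \<rho>' \<and> sat K \<rho>' f)"

definition models_st :: "'s kripke \<Rightarrow> hs \<Rightarrow> bool" where
  "models_st K \<psi> \<longleftrightarrow> (\<forall>\<rho>. is_init_trace K \<rho> \<longrightarrow> sat K \<rho> \<psi>)"

(* States encoded as naturals: s_i = i for 0 <= i <= 2n, t = 2n+1 *)
definition Sn :: "nat \<Rightarrow> nat set" where
  "Sn n = {0..2*n+1}"

definition deltan :: "nat \<Rightarrow> (nat \<times> nat) set" where
  "deltan n = {(0,0)} \<union> {(i, Suc i) | i. i < 2*n+1} \<union> {(2*n+1, 2*n+1)}"

definition mun :: "nat \<Rightarrow> nat \<Rightarrow> AP set" where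
  "mun n s = (if s = 2*n+1 then {P} else {})"

definition Kn :: "nat \<Rightarrow> nat kripke" where
  "Kn n = \<lparr>states = Sn n, trans = deltan n, lab = mun n, init = 0\<rparr>"

definition Mn :: "nat \<Rightarrow> nat kripke" where
  "Mn n = \<lparr>states = Sn n, trans = deltan n, lab = mun n, init = 1\<rparr>"

end

theory Submission
  imports Defs
begin

(* With s_i = i and t = 2n+1, every trace of K_n is a window of consecutive integers clamped
   into [0, 2n+1]. Up to what a formula of size at most k can detect, a trace is described by
   its number of t-states, its number of other states and, while t has not been reached, the
   distance of its last state to s_2n; call two traces k-equivalent if the first numbers agree
   and the other two agree up to the threshold k. For k <= 2n, a move along any HS modality in
   one trace can be answered in a k-equivalent trace so that the results are j-equivalent,
   where j is the size of the argument of the modality, or of each of its two conjuncts for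
   <B> and <Bbar>; in the latter case this needs k >= 2j + 2, which is what balancedness
   provides. Hence k-equivalent traces satisfy the same balanced formulas of size at most k.
   Finally, every initial trace of K_n is n-equivalent to one of M_n and vice versa: the
   s_0-loops of K_n only produce counts and gaps beyond those of M_n, and these are cut off
   at the threshold n. *)

definition clamp :: "nat \<Rightarrow> int \<Rightarrow> int" where
  "clamp n q = min (max q 0) (2 * int n + 1)"

definition window :: "nat \<Rightarrow> int \<Rightarrow> nat \<Rightarrow> nat list" where
  "window n u m = map (\<lambda>i. nat (clamp n (u + int i))) [0..<m]"

lemma mem_deltan_iff:
  "(a, b) \<in> deltan n \<longleftrightarrow>
     (a = 0 \<and> b = 0) \<or> (a < 2*n+1 \<and> b = Suc a) \<or> (a = 2*n+1 \<and> b = 2*n+1)"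
  unfolding deltan_def by auto

lemma run_Kn_eq_window:
  assumes "\<forall>i. f i \<in> Sn n \<and> (f i, f (Suc i)) \<in> deltan n"
  shows "\<exists>u. \<forall>i\<le>N. f i = nat (clamp n (u + int i))"
proof (induction N)
  case 0
  have "f 0 \<le> 2*n+1" using assms unfolding Sn_def by auto
  then show ?case by (intro exI[of _ "int (f 0)"]) (auto simp: clamp_def)
next
  case (Suc N)
  then obtain u where u: "\<forall>i\<le>N. f i = nat (clamp n (u + int i))" by blast
  have step: "(f N, f (Suc N)) \<in> deltan n" using assms by auto
  have fN: "f N = nat (clamp n (u + int N))" using u by auto
  show ?case
  proof (cases "f N = 0")
    case True
    \<comment> \<open>the run has stayed in s_0 so far, so it can be re-anchored to end at position 0 or 1\<close>
    have stay: "\<forall>i\<le>N. f i = 0"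
    proof (intro allI impI)
      fix i assume "i \<le> N"
      moreover have "u + int N \<le> 0" using True fN by (auto simp: clamp_def)
      ultimately show "f i = 0" using u by (auto simp: clamp_def)
    qed
    from step True have "f (Suc N) = 0 \<or> f (Suc N) = 1" by (auto simp: mem_deltan_iff)
    then show ?thesis
    proof
      assume "f (Suc N) = 0"
      then show ?thesis
        by (intro exI[of _ "- int N - 1"]) (use stay in \<open>auto simp: clamp_def le_Suc_eq\<close>)
    next
      assume "f (Suc N) = 1"
      then show ?thesis
        by (intro exI[of _ "- int N"]) (use stay in \<open>auto simp: clamp_def le_Suc_eq\<close>)
    qed
  next
    case False
    then have "(f N < 2*n+1 \<and> f (Suc N) = Suc (f N)) \<or> (f N = 2*n+1 \<and> f (Suc N) = 2*n+1)"
      using step by (auto simp: mem_deltan_iff)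
    then have "f (Suc N) = nat (clamp n (u + int (Suc N)))"
      using fN False by (auto simp: clamp_def split: if_splits)
    then show ?thesis using u by (intro exI[of _ u]) (auto simp: le_Suc_eq)
  qed
qed

lemma is_trace_Kn_iff: "is_trace (Kn n) \<rho> \<longleftrightarrow> (\<exists>u m. 1 \<le> m \<and> \<rho> = window n u m)"
proof
  assume "is_trace (Kn n) \<rho>"
  then obtain f where f: "\<forall>i. f i \<in> Sn n \<and> (f i, f (Suc i)) \<in> deltan n"
    and \<rho>: "\<rho> = map f [0..<length \<rho>]" and ne: "\<rho> \<noteq> []"
    unfolding is_trace_def Kn_def by auto
  obtain u where u: "\<forall>i\<le>length \<rho>. f i = nat (clamp n (u + int i))"
    using run_Kn_eq_window[OF f] by blast
  have "\<rho> = window n u (length \<rho>)" unfolding window_def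
    by (subst \<rho>) (auto intro!: map_cong u[rule_format])
  then show "\<exists>u m. 1 \<le> m \<and> \<rho> = window n u m" using ne
    by (intro exI[of _ u] exI[of _ "length \<rho>"]) (auto simp: Suc_le_eq)
next
  assume "\<exists>u m. 1 \<le> m \<and> \<rho> = window n u m"
  then obtain u m where m: "1 \<le> m" and \<rho>: "\<rho> = window n u m" by blast
  define f where "f i = nat (clamp n (u + int i))" for i
  have "\<forall>i. f i \<in> Sn n \<and> (f i, f (Suc i)) \<in> deltan n"
    unfolding f_def Sn_def mem_deltan_iff clamp_def by auto
  moreover have "\<rho> = map f [0..<length \<rho>]" using \<rho> by (simp add: window_def f_def)
  moreover have "\<rho> \<noteq> []" using \<rho> m by (auto simp: window_def)
  ultimately show "is_trace (Kn n) \<rho>" unfolding is_trace_def Kn_def by auto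
qed

lemma length_window [simp]: "length (window n u m) = m"
  by (simp add: window_def)

lemma window_Suc: "window n u (Suc m) = window n u m @ [nat (clamp n (u + int m))]"
  by (simp add: window_def)

lemma hd_window: "1 \<le> m \<Longrightarrow> hd (window n u m) = nat (clamp n u)"
  by (cases m) (auto simp: window_def simp del: upt_Suc simp add: upt_conv_Cons)

lemma last_window: "1 \<le> m \<Longrightarrow> last (window n u m) = nat (clamp n (u + int m - 1))"
  by (cases m) (auto simp: window_Suc)

lemma take_window: "k \<le> m \<Longrightarrow> take k (window n u m) = window n u k"
  by (simp add: window_def take_map)

lemma drop_window: "c \<le> m \<Longrightarrow> drop c (window n u m) = window n (u + int c) (m - c)"
  by (rule nth_equalityI) (auto simp: window_def algebra_simps)

lemma window_eqI:
  assumes "u = u' \<or> (u + int m \<le> 1 \<and> u' + int m \<le> 1) \<or> (u \<ge> 2 * int n + 1 \<and> u' \<ge> 2 * int n + 1)"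
  shows "window n u m = window n u' m"
  using assms unfolding window_def by (auto simp: clamp_def)

lemma Pref_window_iff:
  "\<sigma> \<in> Pref (window n u m) \<longleftrightarrow> (\<exists>k. 1 \<le> k \<and> k < m \<and> \<sigma> = window n u k)"
proof
  assume "\<sigma> \<in> Pref (window n u m)"
  then obtain i where "i < m - 1" "\<sigma> = take (Suc i) (window n u m)" unfolding Pref_def by auto
  then show "\<exists>k. 1 \<le> k \<and> k < m \<and> \<sigma> = window n u k"
    by (intro exI[of _ "Suc i"]) (auto simp: take_window)
next
  assume "\<exists>k. 1 \<le> k \<and> k < m \<and> \<sigma> = window n u k"
  then obtain k where "1 \<le> k" "k < m" "\<sigma> = window n u k" by blast
  then have "\<sigma> = take (Suc (k - 1)) (window n u m) \<and> k - 1 < length (window n u m) - 1"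
    by (auto simp: take_window)
  then show "\<sigma> \<in> Pref (window n u m)" unfolding Pref_def by blast
qed

lemma Suff_window_iff:
  "\<sigma> \<in> Suff (window n u m) \<longleftrightarrow> (\<exists>c. 1 \<le> c \<and> c < m \<and> \<sigma> = window n (u + int c) (m - c))"
proof
  assume "\<sigma> \<in> Suff (window n u m)"
  then obtain i where "1 \<le> i" "i < m" "\<sigma> = drop i (window n u m)" unfolding Suff_def by auto
  then show "\<exists>c. 1 \<le> c \<and> c < m \<and> \<sigma> = window n (u + int c) (m - c)"
    by (intro exI[of _ i]) (auto simp: drop_window)
next
  assume "\<exists>c. 1 \<le> c \<and> c < m \<and> \<sigma> = window n (u + int c) (m - c)"
  then obtain c where "1 \<le> c" "c < m" "\<sigma> = window n (u + int c) (m - c)" by blast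
  then have "\<sigma> = drop c (window n u m) \<and> 1 \<le> c \<and> c < length (window n u m)"
    by (auto simp: drop_window)
  then show "\<sigma> \<in> Suff (window n u m)" unfolding Suff_def by blast
qed

(* The profile of window n u m: its numbers of t-states and of other states, and the distance
   from its last state to s_2n while t has not been reached (0 afterwards). *)

definition t_count :: "nat \<Rightarrow> int \<Rightarrow> nat \<Rightarrow> int" where
  "t_count n u m = max 0 (u + int m - max u (2 * int n + 1))"

definition s_count :: "nat \<Rightarrow> int \<Rightarrow> nat \<Rightarrow> int" where
  "s_count n u m = int m - t_count n u m"

definition gap :: "nat \<Rightarrow> int \<Rightarrow> nat \<Rightarrow> int" where
  "gap n u m = (if t_count n u m = 0 then 2 * int n - clamp n (u + int m - 1) else 0)"

lemma t_count_eq_length_filter: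
  "t_count n u m = int (length (filter (\<lambda>s. s = 2*n+1) (window n u m)))"
proof (induction m)
  case 0
  then show ?case by (simp add: t_count_def window_def)
next
  case (Suc m)
  have "t_count n u (Suc m) = t_count n u m + (if u + int m \<ge> 2 * int n + 1 then 1 else 0)"
    unfolding t_count_def by auto
  moreover have "nat (clamp n (u + int m)) = 2*n+1 \<longleftrightarrow> u + int m \<ge> 2 * int n + 1"
    unfolding clamp_def by auto
  ultimately show ?case using Suc by (simp add: window_Suc)
qed

lemma profile_window_invariant:
  assumes "window n u m = window n u' m" "1 \<le> m"
  shows "t_count n u m = t_count n u' m" "s_count n u m = s_count n u' m" "gap n u m = gap n u' m"
proof -
  show t: "t_count n u m = t_count n u' m" using assms by (simp add: t_count_eq_length_filter)
  then show "s_count n u m = s_count n u' m" by (simp add: s_count_def)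
  have "nat (clamp n (u + int m - 1)) = nat (clamp n (u' + int m - 1))"
    using last_window[OF assms(2), of n u] last_window[OF assms(2), of n u'] assms(1) by simp
  moreover have "0 \<le> clamp n q" for q by (simp add: clamp_def)
  ultimately have "clamp n (u + int m - 1) = clamp n (u' + int m - 1)"
    by (metis eq_nat_nat_iff)
  then show "gap n u m = gap n u' m" using t by (simp add: gap_def)
qed

lemma profile_basic:
  assumes "1 \<le> m"
  shows "s_count n u m + t_count n u m = int m" "0 \<le> s_count n u m" "0 \<le> t_count n u m"
    "0 \<le> gap n u m" "gap n u m \<le> 2 * int n" "t_count n u m \<noteq> 0 \<Longrightarrow> gap n u m = 0"
  using assms unfolding s_count_def t_count_def gap_def clamp_def by auto

lemma profile_endpoint:
  assumes "1 \<le> m"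
  shows "t_count n u m = 0 \<Longrightarrow> u + int m - 1 \<le> 2 * int n \<and> gap n u m = 2 * int n - max (u + int m - 1) 0"
    and "t_count n u m \<ge> 1 \<Longrightarrow> s_count n u m \<ge> 1 \<Longrightarrow> u + int m - 1 = 2 * int n + t_count n u m \<and> u \<le> 2 * int n"
    and "s_count n u m = 0 \<Longrightarrow> u \<ge> 2 * int n + 1 \<and> t_count n u m = int m"
  using assms unfolding s_count_def t_count_def gap_def clamp_def by auto

lemma profile_drop:
  assumes "1 \<le> c" "c < m"
  shows "int c < s_count n u m \<Longrightarrow> s_count n (u + int c) (m - c) = s_count n u m - int c
           \<and> t_count n (u + int c) (m - c) = t_count n u m \<and> gap n (u + int c) (m - c) = gap n u m"
    and "int c \<ge> s_count n u m \<Longrightarrow> s_count n (u + int c) (m - c) = 0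
           \<and> t_count n (u + int c) (m - c) = t_count n u m - (int c - s_count n u m)
           \<and> gap n (u + int c) (m - c) = 0"
  using assms unfolding s_count_def t_count_def gap_def by (auto simp: of_nat_diff)

lemma profile_take:
  assumes "1 \<le> k" "k < m"
  shows "int k > s_count n u m \<Longrightarrow> s_count n u k = s_count n u m
           \<and> t_count n u k = int k - s_count n u m \<and> gap n u k = 0"
    and "int k \<le> s_count n u m \<Longrightarrow> s_count n u k = int k \<and> t_count n u k = 0
           \<and> gap n u k = min (2 * int n) (gap n u m + s_count n u m - int k)"
  using assms unfolding s_count_def t_count_def gap_def clamp_def by (auto simp: of_nat_diff)

lemma profile_extend:
  assumes "m < m1" "1 \<le> m"
  shows "t_count n u m \<ge> 1 \<Longrightarrow> s_count n u m1 = s_count n u m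
           \<and> t_count n u m1 = t_count n u m + int m1 - int m \<and> gap n u m1 = 0"
    and "t_count n u m = 0 \<Longrightarrow> u + int m1 - 1 \<le> 2 * int n \<Longrightarrow>
           s_count n u m1 = s_count n u m + int m1 - int m \<and> t_count n u m1 = 0
           \<and> gap n u m1 = 2 * int n - max (u + int m1 - 1) 0"
    and "t_count n u m = 0 \<Longrightarrow> u + int m1 - 1 > 2 * int n \<Longrightarrow>
           s_count n u m1 = s_count n u m + 2 * int n - (u + int m - 1)
           \<and> t_count n u m1 = u + int m1 - 1 - 2 * int n \<and> gap n u m1 = 0"
  using assms unfolding s_count_def t_count_def gap_def clamp_def by auto

lemma profile_extend_left:
  assumes "1 \<le> c" "c < m" "s_count n (u + int c) (m - c) \<ge> 1"
  shows "s_count n u m = s_count n (u + int c) (m - c) + int c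
    \<and> t_count n u m = t_count n (u + int c) (m - c) \<and> gap n u m = gap n (u + int c) (m - c)"
  using assms unfolding s_count_def t_count_def gap_def clamp_def by (auto simp: of_nat_diff)

lemma sat_Prop_window: "1 \<le> m \<Longrightarrow> sat (Kn n) (window n u m) Prop \<longleftrightarrow> s_count n u m = 0"
proof -
  assume m: "1 \<le> m"
  have "sat (Kn n) (window n u m) Prop \<longleftrightarrow> (\<forall>i<m. nat (clamp n (u + int i)) = 2*n+1)"
    by (auto simp: Kn_def mun_def window_def)
  also have "\<dots> \<longleftrightarrow> u \<ge> 2 * int n + 1"
  proof
    assume "\<forall>i<m. nat (clamp n (u + int i)) = 2*n+1"
    then have "nat (clamp n u) = 2*n+1" using m by (metis add.right_neutral of_nat_0 less_le_trans zero_less_one)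
    then show "u \<ge> 2 * int n + 1" by (auto simp: clamp_def)
  qed (auto simp: clamp_def)
  also have "\<dots> \<longleftrightarrow> s_count n u m = 0" using m unfolding s_count_def t_count_def by auto
  finally show ?thesis .
qed

definition profile_equiv :: "nat \<Rightarrow> nat \<Rightarrow> int \<Rightarrow> nat \<Rightarrow> int \<Rightarrow> nat \<Rightarrow> bool" where
  "profile_equiv n k u m u' m' \<longleftrightarrow> t_count n u m = t_count n u' m'
     \<and> min (s_count n u m) (int k) = min (s_count n u' m') (int k)
     \<and> min (gap n u m) (int k) = min (gap n u' m') (int k)"

definition trace_equiv :: "nat \<Rightarrow> nat \<Rightarrow> nat list \<Rightarrow> nat list \<Rightarrow> bool" where
  "trace_equiv n k \<rho> \<rho>' \<longleftrightarrow> (\<exists>u m u' m'. 1 \<le> m \<and> 1 \<le> m'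
     \<and> \<rho> = window n u m \<and> \<rho>' = window n u' m' \<and> profile_equiv n k u m u' m')"

lemma trace_equivI:
  "1 \<le> m \<Longrightarrow> 1 \<le> m' \<Longrightarrow> profile_equiv n k u m u' m' \<Longrightarrow>
    trace_equiv n k (window n u m) (window n u' m')"
  unfolding trace_equiv_def by blast

lemma trace_equiv_windowD:
  assumes "trace_equiv n k (window n u m) (window n u' m')"
  shows "profile_equiv n k u m u' m'"
proof -
  obtain u0 m0 u0' m0' where "1 \<le> m0" "1 \<le> m0'" "window n u m = window n u0 m0"
    "window n u' m' = window n u0' m0'" "profile_equiv n k u0 m0 u0' m0'"
    using assms unfolding trace_equiv_def by blast
  moreover from this have "m0 = m" "m0' = m'" by (metis length_window)+
  ultimately show ?thesis
    unfolding profile_equiv_def by (metis profile_window_invariant)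
qed

lemma trace_equiv_sym: "trace_equiv n k \<rho> \<rho>' \<Longrightarrow> trace_equiv n k \<rho>' \<rho>"
  unfolding trace_equiv_def profile_equiv_def by metis

lemma trace_equiv_mono: "trace_equiv n k \<rho> \<rho>' \<Longrightarrow> j \<le> k \<Longrightarrow> trace_equiv n j \<rho> \<rho>'"
  unfolding trace_equiv_def profile_equiv_def by (smt (verit) of_nat_mono min_def)

lemma move_E:
  assumes equiv: "trace_equiv n k \<rho> \<rho>'" and j: "1 \<le> j" "j < k" and \<sigma>: "\<sigma> \<in> Suff \<rho>"
  shows "\<exists>\<sigma>'\<in>Suff \<rho>'. trace_equiv n j \<sigma> \<sigma>'"
proof -
  obtain u m u' m' where m: "1 \<le> m" "1 \<le> m'" and \<rho>: "\<rho> = window n u m" "\<rho>' = window n u' m'"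
    and C: "profile_equiv n k u m u' m'" using equiv unfolding trace_equiv_def by blast
  obtain c where c: "1 \<le> c" "c < m" and \<sigma>_eq: "\<sigma> = window n (u + int c) (m - c)"
    using \<sigma> \<rho> by (auto simp: Suff_window_iff)
  define x where "x = s_count n u m"
  define x' where "x' = s_count n u' m'"
  \<comment> \<open>\<sigma>' drops as many t-states as \<sigma> and keeps as many other states, up to j\<close>
  define ci :: int where "ci = (if int c \<ge> x then x' + (int c - x) else if x = x' then int c
      else if x - int c < int j then x' - (x - int c) else x' - int j)"
  define c' where "c' = nat ci"
  note P = profile_basic[OF m(1), of n u, folded x_def] profile_basic[OF m(2), of n u', folded x'_def]
  note C' = C[unfolded profile_equiv_def, folded x_def x'_def]
  have I: "int j < int k" "1 \<le> int j" "1 \<le> int c" "int c < int m" using c j by auto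
  have c': "1 \<le> c'" "c' < m'" "int c' = ci"
    using P C' c j unfolding c'_def ci_def by (auto simp: min_def split: if_splits)
  have "profile_equiv n j (u + int c) (m - c) (u' + int c') (m' - c')"
    using profile_drop[OF c, of n u, folded x_def] profile_drop[OF c'(1,2), of n u', folded x'_def]
      P C' I c'(3)
    unfolding ci_def profile_equiv_def by (smt (verit) min_def)
  then have "trace_equiv n j \<sigma> (window n (u' + int c') (m' - c'))"
    unfolding \<sigma>_eq using c c' by (intro trace_equivI) auto
  moreover have "window n (u' + int c') (m' - c') \<in> Suff \<rho>'"
    using \<rho> c' by (auto simp: Suff_window_iff)
  ultimately show ?thesis by blast
qed

lemma move_B:
  assumes equiv: "trace_equiv n k \<rho> \<rho>'" and j: "1 \<le> j" "2 * j + 2 \<le> k" "j \<le> 2 * n"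
    and \<sigma>: "\<sigma> \<in> Pref \<rho>"
  shows "\<exists>\<sigma>'\<in>Pref \<rho>'. trace_equiv n j \<sigma> \<sigma>'"
proof -
  obtain u m u' m' where m: "1 \<le> m" "1 \<le> m'" and \<rho>: "\<rho> = window n u m" "\<rho>' = window n u' m'"
    and C: "profile_equiv n k u m u' m'" using equiv unfolding trace_equiv_def by blast
  obtain l where l: "1 \<le> l" "l < m" and \<sigma>_eq: "\<sigma> = window n u l"
    using \<sigma> \<rho> by (auto simp: Pref_window_iff)
  define x where "x = s_count n u m"
  define x' where "x' = s_count n u' m'"
  define e where "e = gap n u m"
  define e' where "e' = gap n u' m'"
  \<comment> \<open>\<sigma>' keeps as many t-states as \<sigma>, and as many other states and the same gap up to j\<close>
  define li :: int where "li = (if int l > x then x' + (int l - x) else if int l < int j then int l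
      else if e + (x - int l) \<ge> int j then int j else x' - (x - int l))"
  define l' where "l' = nat li"
  note P = profile_basic[OF m(1), of n u, folded x_def e_def]
    profile_basic[OF m(2), of n u', folded x'_def e'_def]
  note C' = C[unfolded profile_equiv_def, folded x_def x'_def e_def e'_def]
  have I: "2 * int j + 2 \<le> int k" "1 \<le> int j" "1 \<le> int l" "int l < int m" "int j \<le> 2 * int n"
    using l j by auto
  have "1 \<le> li" "li < int m'"
    using P C' I unfolding li_def by (smt (verit) min_def)+
  then have l': "1 \<le> l'" "l' < m'" "int l' = li" unfolding l'_def by auto
  have "profile_equiv n j u l u' l'"
    using profile_take[OF l, of n u, folded x_def e_def] profile_take[OF l'(1,2), of n u', folded x'_def e'_def]
      l'(3) P C' I
    unfolding li_def profile_equiv_def by (smt (verit) min_def)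
  then have "trace_equiv n j \<sigma> (window n u' l')"
    unfolding \<sigma>_eq using l l' by (intro trace_equivI) auto
  moreover have "window n u' l' \<in> Pref \<rho>'" using \<rho> l' by (auto simp: Pref_window_iff)
  ultimately show ?thesis by blast
qed

lemma window_reanchor:
  assumes C: "profile_equiv n k u m u' m'" and m: "1 \<le> m" "1 \<le> m'" and k: "1 \<le> k"
  obtains u'' where "window n u'' m' = window n u' m'" "profile_equiv n k u m u'' m'"
    "gap n u m = gap n u'' m' \<Longrightarrow> u'' + int m' = u + int m"
    "gap n u m \<noteq> gap n u'' m' \<Longrightarrow> 1 \<le> u'' + int m'"
proof -
  define u'' where
    "u'' = (if gap n u m = gap n u' m' then u + int m else max (u' + int m') 1) - int m'"
  have "u'' = u' \<or> (u'' + int m' \<le> 1 \<and> u' + int m' \<le> 1)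
      \<or> (u'' \<ge> 2 * int n + 1 \<and> u' \<ge> 2 * int n + 1)"
    using profile_basic[OF m(1), of n u] profile_basic[OF m(2), of n u']
      profile_endpoint[OF m(1), of n u] profile_endpoint[OF m(2), of n u'] C k
    unfolding profile_equiv_def u''_def by (smt (verit) min_def of_nat_mono of_nat_1)
  then have same: "window n u'' m' = window n u' m'" by (rule window_eqI)
  note invariant = profile_window_invariant[OF same m(2)]
  have "profile_equiv n k u m u'' m'" using C unfolding profile_equiv_def invariant .
  moreover have "gap n u m = gap n u'' m' \<Longrightarrow> u'' + int m' = u + int m"
    "gap n u m \<noteq> gap n u'' m' \<Longrightarrow> 1 \<le> u'' + int m'"
    unfolding invariant(3) unfolding u''_def by auto
  ultimately show ?thesis using same that by blast
qed

lemma profile_extend_right: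
  assumes C: "profile_equiv n k u m u' m'" and m: "1 \<le> m" "1 \<le> m'" "m < m1"
    and j: "1 \<le> j" "2 * j + 2 \<le> k" "j \<le> 2 * n"
    and anchor: "gap n u m = gap n u' m' \<Longrightarrow> u' + int m' = u + int m"
      "gap n u m \<noteq> gap n u' m' \<Longrightarrow> 1 \<le> u' + int m'"
  obtains m'' where "m' < m''" "profile_equiv n j u m1 u' m''"
proof -
  define x where "x = s_count n u m"
  define x' where "x' = s_count n u' m'"
  define e where "e = gap n u m"
  define e' where "e' = gap n u' m'"
  define y where "y = t_count n u m"
  define v where "v = u + int m - 1"
  define v' where "v' = u' + int m' - 1"
  define c where "c = int m1 - int m"
  define x1 where "x1 = s_count n u m1"
  define y1 where "y1 = t_count n u m1"
  define e1 where "e1 = gap n u m1"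
  note P = profile_basic[OF m(1), of n u, folded x_def y_def e_def]
    profile_basic[OF m(2), of n u', folded x'_def e'_def]
  note C' = C[unfolded profile_equiv_def, folded x_def x'_def e_def e'_def y_def]
  have I: "2 * int j + 2 \<le> int k" "1 \<le> int j" "int j \<le> 2 * int n" "1 \<le> c"
    "e = e' \<Longrightarrow> v' = v" "e \<noteq> e' \<Longrightarrow> 0 \<le> v'"
    using j m anchor unfolding c_def e_def e'_def v_def v'_def by auto
  note E = profile_endpoint[OF m(1), of n u, folded x_def y_def e_def v_def]
    profile_endpoint[OF m(2), of n u', folded x'_def e'_def v'_def]
  have X: "y \<ge> 1 \<Longrightarrow> x1 = x \<and> y1 = y + c \<and> e1 = 0"
    "y = 0 \<Longrightarrow> v + c \<le> 2 * int n \<Longrightarrow> x1 = x + c \<and> y1 = 0 \<and> e1 = 2 * int n - max (v + c) 0"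
    "y = 0 \<Longrightarrow> v + c > 2 * int n \<Longrightarrow> x1 = x + 2 * int n - v \<and> y1 = v + c - 2 * int n \<and> e1 = 0"
    using profile_extend[OF m(3,1), of n u]
    unfolding x1_def y1_def e1_def x_def y_def v_def c_def by (auto simp: algebra_simps)
  \<comment> \<open>if the gaps agree, \<rho> and \<rho>' end in the same state and are extended alike; otherwise
      both gaps exceed 2j and c' only has to reproduce the new profile up to j\<close>
  define c' where "c' = (if e = e' then c else if y1 \<ge> 1 then e' + y1 else if e1 \<ge> int j then
       (if x1 < int j then c else int j) else e' - e1)"
  define m'' where "m'' = m' + nat c'"
  have "1 \<le> c'"
    using P C' I E X unfolding c'_def by (smt (verit) min_def)
  then have m'': "m' < m''" "int m'' = int m' + c'" unfolding m''_def by auto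
  have X': "y \<ge> 1 \<Longrightarrow> s_count n u' m'' = x' \<and> t_count n u' m'' = y + c' \<and> gap n u' m'' = 0"
    "y = 0 \<Longrightarrow> v' + c' \<le> 2 * int n \<Longrightarrow> s_count n u' m'' = x' + c' \<and> t_count n u' m'' = 0
       \<and> gap n u' m'' = 2 * int n - max (v' + c') 0"
    "y = 0 \<Longrightarrow> v' + c' > 2 * int n \<Longrightarrow> s_count n u' m'' = x' + 2 * int n - v'
       \<and> t_count n u' m'' = v' + c' - 2 * int n \<and> gap n u' m'' = 0"
    using profile_extend[OF m''(1) m(2), of n u'] m''(2) C'
    unfolding x'_def y_def v'_def by (auto simp: algebra_simps)
  have "profile_equiv n j u m1 u' m''"
    using P C' I E X X' unfolding c'_def profile_equiv_def x1_def y1_def e1_def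
    by (smt (verit) min_def)
  with m''(1) show ?thesis by (rule that)
qed

lemma move_Bbar:
  assumes equiv: "trace_equiv n k \<rho> \<rho>'" and j: "1 \<le> j" "2 * j + 2 \<le> k" "j \<le> 2 * n"
    and \<sigma>: "is_trace (Kn n) \<sigma>" "\<rho> \<in> Pref \<sigma>"
  shows "\<exists>\<sigma>'. is_trace (Kn n) \<sigma>' \<and> \<rho>' \<in> Pref \<sigma>' \<and> trace_equiv n j \<sigma> \<sigma>'"
proof -
  obtain u m1 where m1: "1 \<le> m1" and \<sigma>_eq: "\<sigma> = window n u m1"
    using \<sigma>(1) is_trace_Kn_iff by blast
  obtain m where m: "1 \<le> m" "m < m1" and \<rho>: "\<rho> = window n u m"
    using \<sigma>(2) \<sigma>_eq by (auto simp: Pref_window_iff)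
  obtain u' m' where m': "1 \<le> m'" and \<rho>': "\<rho>' = window n u' m'"
    using equiv unfolding trace_equiv_def by blast
  have "profile_equiv n k u m u' m'"
    using equiv \<rho> \<rho>' trace_equiv_windowD by blast
  moreover have "1 \<le> k" using j by simp
  ultimately obtain u'' where same: "window n u'' m' = window n u' m'"
    and anchored: "profile_equiv n k u m u'' m'"
      "gap n u m = gap n u'' m' \<Longrightarrow> u'' + int m' = u + int m"
      "gap n u m \<noteq> gap n u'' m' \<Longrightarrow> 1 \<le> u'' + int m'"
    using window_reanchor m(1) m' by blast
  obtain m'' where m'': "m' < m''" and C: "profile_equiv n j u m1 u'' m''"
    using profile_extend_right[OF anchored(1) m(1) m' m(2) j anchored(2,3)] by blast
  have "is_trace (Kn n) (window n u'' m'')"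
    unfolding is_trace_Kn_iff using m' m'' by (intro exI[of _ u''] exI[of _ m'']) auto
  moreover have "\<rho>' \<in> Pref (window n u'' m'')"
    using \<rho>' same m' m'' by (auto simp: Pref_window_iff)
  moreover have "trace_equiv n j \<sigma> (window n u'' m'')"
    unfolding \<sigma>_eq using m1 m'' C by (intro trace_equivI) auto
  ultimately show ?thesis by blast
qed

lemma move_Ebar:
  assumes equiv: "trace_equiv n k \<rho> \<rho>'" and j: "1 \<le> j" "j < k"
    and \<sigma>: "is_trace (Kn n) \<sigma>" "\<rho> \<in> Suff \<sigma>"
  shows "\<exists>\<sigma>'. is_trace (Kn n) \<sigma>' \<and> \<rho>' \<in> Suff \<sigma>' \<and> trace_equiv n j \<sigma> \<sigma>'"
proof -
  obtain u m1 where m1: "1 \<le> m1" and \<sigma>_eq: "\<sigma> = window n u m1"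
    using \<sigma>(1) is_trace_Kn_iff by blast
  obtain c where c: "1 \<le> c" "c < m1" and \<rho>: "\<rho> = window n (u + int c) (m1 - c)"
    using \<sigma>(2) \<sigma>_eq by (auto simp: Suff_window_iff)
  obtain u' m' where m': "1 \<le> m'" and \<rho>': "\<rho>' = window n u' m'"
    using equiv unfolding trace_equiv_def by blast
  define m where "m = m1 - c"
  have m: "1 \<le> m" using c unfolding m_def by simp
  have C: "profile_equiv n k (u + int c) m u' m'"
    using equiv \<rho> \<rho>' trace_equiv_windowD unfolding m_def by blast
  have jk: "int j \<le> int k" "1 \<le> int j" and c1: "1 \<le> int c" using j c by auto
  show ?thesis
  proof (cases "s_count n (u + int c) m = 0")
    case True
    \<comment> \<open>then \<rho> and \<rho>' consist of t-states only, so they have the same length and coincide\<close>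
    then have "s_count n u' m' = 0"
      using C jk profile_basic(2)[OF m', of n u'] unfolding profile_equiv_def by (smt (verit) min_def)
    then have "u' \<ge> 2 * int n + 1" "u + int c \<ge> 2 * int n + 1" "m = m'"
      using profile_endpoint(3)[OF m True] profile_endpoint(3)[OF m'] C
      unfolding profile_equiv_def by auto
    then have "\<rho>' = \<rho>" using \<rho> \<rho>' window_eqI unfolding m_def by metis
    moreover have "trace_equiv n j \<sigma> \<sigma>"
      unfolding \<sigma>_eq using m1 by (intro trace_equivI) (auto simp: profile_equiv_def)
    ultimately show ?thesis using \<sigma> by blast
  next
    case False
    \<comment> \<open>both \<rho> and \<rho>' contain a state other than t, so prepending c states to either one
        adds c to that count and leaves the rest of the profile unchanged\<close>
    then have x: "s_count n (u + int c) m \<ge> 1"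
      using profile_basic(2)[OF m, of n "u + int c"] by simp
    then have x': "s_count n u' m' \<ge> 1"
      using C jk profile_basic(2)[OF m', of n u'] unfolding profile_equiv_def by (smt (verit) min_def)
    have c': "c < m' + c" using m' by simp
    have "profile_equiv n j u m1 (u' - int c) (m' + c)"
      using profile_extend_left[OF c, of n u] profile_extend_left[OF c(1) c', of n "u' - int c", simplified]
        x x' C jk c1 unfolding m_def profile_equiv_def by (smt (verit) min_def)
    then have "trace_equiv n j \<sigma> (window n (u' - int c) (m' + c))"
      unfolding \<sigma>_eq using m1 m' by (intro trace_equivI) auto
    moreover have "is_trace (Kn n) (window n (u' - int c) (m' + c))"
      unfolding is_trace_Kn_iff using m' by (intro exI[of _ "u' - int c"] exI[of _ "m' + c"]) auto
    moreover have "\<rho>' \<in> Suff (window n (u' - int c) (m' + c))"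
      unfolding Suff_window_iff \<rho>' using c m' by (intro exI[of _ c]) auto
    ultimately show ?thesis by blast
  qed
qed

lemma hs_size_pos: "1 \<le> hs_size \<phi>"
  by (cases \<phi>) auto

lemma sat_transfer:
  assumes "balanced \<phi>" "hs_size \<phi> \<le> k" "k \<le> 2 * n" "trace_equiv n k \<rho> \<rho>'" "sat (Kn n) \<rho> \<phi>"
  shows "sat (Kn n) \<rho>' \<phi>"
  using assms
proof (induction "hs_size \<phi>" arbitrary: \<phi> k \<rho> \<rho>' rule: less_induct)
  case less
  note IH = less.hyps and bal = less.prems(1) and size = less.prems(2,3)
    and equiv = less.prems(4) and sat = less.prems(5)
  show ?case
  proof (cases \<phi>)
    case Prop
    obtain u m u' m' where m: "1 \<le> m" "1 \<le> m'" and \<rho>: "\<rho> = window n u m" "\<rho>' = window n u' m'"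
      and C: "profile_equiv n k u m u' m'" using equiv unfolding trace_equiv_def by blast
    have "1 \<le> int k" using size Prop by simp
    then have "s_count n u m = 0 \<longleftrightarrow> s_count n u' m' = 0"
      using C profile_basic(2)[OF m(1), of n u] profile_basic(2)[OF m(2), of n u']
      unfolding profile_equiv_def by (smt (verit) min_def)
    then show ?thesis
      using sat unfolding Prop \<rho> sat_Prop_window[OF m(1)] sat_Prop_window[OF m(2)] by blast
  next
    case (Neg f)
    then show ?thesis using IH[of f k \<rho>' \<rho>] trace_equiv_sym[OF equiv] bal size sat by auto
  next
    case (Conj f g)
    then show ?thesis using IH[of f k \<rho> \<rho>'] IH[of g k \<rho> \<rho>'] less.prems by auto
  next
    case (DiaB f)
    then obtain a b where f: "f = Conj a b" "hs_size a = hs_size b" "balanced a" "balanced b"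
      using bal by auto
    have j: "1 \<le> hs_size a" "2 * hs_size a + 2 \<le> k" "hs_size a \<le> 2 * n"
      using hs_size_pos[of a] size DiaB f by auto
    from sat DiaB f obtain \<sigma> where \<sigma>: "\<sigma> \<in> Pref \<rho>" "sat (Kn n) \<sigma> a" "sat (Kn n) \<sigma> b"
      by auto
    with move_B[OF equiv j] obtain \<sigma>' where "\<sigma>' \<in> Pref \<rho>'" "trace_equiv n (hs_size a) \<sigma> \<sigma>'"
      by blast
    with \<sigma> show ?thesis
      using IH[of a "hs_size a" \<sigma> \<sigma>'] IH[of b "hs_size a" \<sigma> \<sigma>'] DiaB f j by auto
  next
    case (DiaBbar f)
    then obtain a b where f: "f = Conj a b" "hs_size a = hs_size b" "balanced a" "balanced b"
      using bal by auto
    have j: "1 \<le> hs_size a" "2 * hs_size a + 2 \<le> k" "hs_size a \<le> 2 * n"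
      using hs_size_pos[of a] size DiaBbar f by auto
    from sat DiaBbar f obtain \<sigma> where
      \<sigma>: "is_trace (Kn n) \<sigma>" "\<rho> \<in> Pref \<sigma>" "sat (Kn n) \<sigma> a" "sat (Kn n) \<sigma> b"
      by auto
    with move_Bbar[OF equiv j] obtain \<sigma>' where
      "is_trace (Kn n) \<sigma>'" "\<rho>' \<in> Pref \<sigma>'" "trace_equiv n (hs_size a) \<sigma> \<sigma>'"
      by blast
    with \<sigma> show ?thesis
      using IH[of a "hs_size a" \<sigma> \<sigma>'] IH[of b "hs_size a" \<sigma> \<sigma>'] DiaBbar f j by auto
  next
    case (DiaE f)
    have j: "1 \<le> hs_size f" "hs_size f < k" using hs_size_pos[of f] size DiaE by auto
    from sat DiaE obtain \<sigma> where \<sigma>: "\<sigma> \<in> Suff \<rho>" "sat (Kn n) \<sigma> f" by auto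
    with move_E[OF equiv j] obtain \<sigma>' where "\<sigma>' \<in> Suff \<rho>'" "trace_equiv n (hs_size f) \<sigma> \<sigma>'"
      by blast
    with \<sigma> show ?thesis using IH[of f "hs_size f" \<sigma> \<sigma>'] DiaE bal size by auto
  next
    case (DiaEbar f)
    have j: "1 \<le> hs_size f" "hs_size f < k" using hs_size_pos[of f] size DiaEbar by auto
    from sat DiaEbar obtain \<sigma> where \<sigma>: "is_trace (Kn n) \<sigma>" "\<rho> \<in> Suff \<sigma>" "sat (Kn n) \<sigma> f"
      by auto
    with move_Ebar[OF equiv j] obtain \<sigma>' where
      "is_trace (Kn n) \<sigma>'" "\<rho>' \<in> Suff \<sigma>'" "trace_equiv n (hs_size f) \<sigma> \<sigma>'"
      by blast
    with \<sigma> show ?thesis using IH[of f "hs_size f" \<sigma> \<sigma>'] DiaEbar bal size by auto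
  qed
qed

lemma is_trace_Mn: "is_trace (Mn n) = is_trace (Kn n)"
  unfolding is_trace_def[abs_def] Kn_def Mn_def by simp

lemma sat_Mn: "sat (Mn n) \<rho> \<phi> = sat (Kn n) \<rho> \<phi>"
proof -
  have "lab (Mn n) = lab (Kn n)" by (simp add: Kn_def Mn_def)
  then show ?thesis by (induction \<phi> arbitrary: \<rho>) (simp_all add: is_trace_Mn)
qed

lemma is_init_trace_Kn_iff:
  "is_init_trace (Kn n) \<rho> \<longleftrightarrow> (\<exists>u m. 1 \<le> m \<and> u \<le> 0 \<and> \<rho> = window n u m)"
proof -
  have "nat (clamp n u) = 0 \<longleftrightarrow> u \<le> 0" for u by (auto simp: clamp_def)
  then show ?thesis
    unfolding is_init_trace_def is_trace_Kn_iff by (auto simp: hd_window Kn_def) blast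
qed

lemma is_init_trace_Mn_iff:
  assumes "1 \<le> n"
  shows "is_init_trace (Mn n) \<rho> \<longleftrightarrow> (\<exists>m. 1 \<le> m \<and> \<rho> = window n 1 m)"
proof -
  have "nat (clamp n u) = 1 \<longleftrightarrow> u = 1" for u using assms by (auto simp: clamp_def)
  then show ?thesis
    unfolding is_init_trace_def is_trace_Mn is_trace_Kn_iff by (auto simp: hd_window Mn_def)
qed

lemma profile_from_s0_matched_from_s1:
  assumes "1 \<le> n" "1 \<le> m" "u \<le> 0"
  shows "\<exists>m'. 1 \<le> m' \<and> profile_equiv n n u m 1 m'"
proof -
  define v where "v = u + int m - 1"
  have T: "t_count n u m = max 0 (v - 2 * int n)" "s_count n u m = int m - t_count n u m"
    "gap n u m = (if t_count n u m = 0 then 2 * int n - min (max v 0) (2 * int n + 1) else 0)"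
    using assms unfolding s_count_def t_count_def gap_def clamp_def v_def by auto
  have T1: "t_count n 1 m' = max 0 (int m' - 2 * int n)" "s_count n 1 m' = int m' - t_count n 1 m'"
    "gap n 1 m' = (if t_count n 1 m' = 0 then 2 * int n - min (max (int m') 0) (2 * int n + 1) else 0)"
    for m'
    unfolding s_count_def t_count_def gap_def clamp_def by auto
  consider "v \<le> 0" | "0 < v" "v \<le> 2 * int n" | "v > 2 * int n" by linarith
  then show ?thesis
  proof cases
    case 1
    have "profile_equiv n n u m 1 (min m n)"
      unfolding profile_equiv_def T T1 using 1 assms by (auto simp: v_def min_def max_def)
    then show ?thesis using assms by (intro exI[of _ "min m n"]) auto
  next
    case 2
    define m' where "m' = (if m < n then m else max (nat v) n)"
    have m': "int m' = (if int m < int n then int m else max v (int n))"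
      using 2 unfolding m'_def by auto
    have "profile_equiv n n u m 1 m'"
      unfolding profile_equiv_def T T1 m' using 2 assms by (auto simp: v_def min_def max_def)
    moreover have "int m' \<ge> 1" using m' assms 2 by auto
    ultimately show ?thesis by (intro exI[of _ m']) auto
  next
    case 3
    define m' where "m' = nat v"
    have m': "int m' = v" using 3 unfolding m'_def by auto
    have "profile_equiv n n u m 1 m'"
      unfolding profile_equiv_def T T1 m' using 3 assms by (auto simp: v_def min_def max_def)
    then show ?thesis using assms 3 m' by (intro exI[of _ m']) auto
  qed
qed

lemma profile_from_s1_matched_from_s0:
  assumes "1 \<le> n" "1 \<le> m'"
  shows "\<exists>u m. 1 \<le> m \<and> u \<le> 0 \<and> profile_equiv n n u m 1 m'"
proof (cases "m' < n")
  case True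
  have "1 \<le> int n" "1 \<le> int m'" "int m' < int n" using assms True by auto
  then have "profile_equiv n n (1 - int m') m' 1 m'"
    unfolding profile_equiv_def s_count_def t_count_def gap_def clamp_def
    by (smt (verit) min_def max_def)
  then show ?thesis using assms by (intro exI[of _ "1 - int m'"] exI[of _ m']) auto
next
  case False
  have "1 \<le> int n" "1 \<le> int m'" "int m' \<ge> int n" "int (m' + 1) = int m' + 1"
    using assms False by auto
  then have "profile_equiv n n 0 (m' + 1) 1 m'"
    unfolding profile_equiv_def s_count_def t_count_def gap_def clamp_def
    by (smt (verit) min_def max_def)
  then show ?thesis using assms by (intro exI[of _ 0] exI[of _ "m' + 1"]) auto
qed

lemma init_trace_Kn_equiv_Mn:
  assumes "1 \<le> n" "is_init_trace (Kn n) \<rho>"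
  shows "\<exists>\<rho>'. is_init_trace (Mn n) \<rho>' \<and> trace_equiv n n \<rho> \<rho>'"
proof -
  obtain u m where "1 \<le> m" "u \<le> 0" "\<rho> = window n u m"
    using assms(2) is_init_trace_Kn_iff by blast
  moreover obtain m' where "1 \<le> m'" "profile_equiv n n u m 1 m'"
    using profile_from_s0_matched_from_s1 assms(1) calculation by blast
  ultimately show ?thesis using is_init_trace_Mn_iff[OF assms(1)] trace_equivI by blast
qed

lemma init_trace_Mn_equiv_Kn:
  assumes "1 \<le> n" "is_init_trace (Mn n) \<rho>'"
  shows "\<exists>\<rho>. is_init_trace (Kn n) \<rho> \<and> trace_equiv n n \<rho> \<rho>'"
proof -
  obtain m' where "1 \<le> m'" "\<rho>' = window n 1 m'"
    using assms is_init_trace_Mn_iff by blast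
  moreover obtain u m where "1 \<le> m" "u \<le> 0" "profile_equiv n n u m 1 m'"
    using profile_from_s1_matched_from_s0 assms(1) calculation by blast
  ultimately show ?thesis using is_init_trace_Kn_iff trace_equivI by blast
qed

theorem lemma5p9:
  fixes n :: nat and \<psi> :: hs
  assumes "n \<ge> 1" and "balanced \<psi>" and "hs_size \<psi> \<le> n"
  shows "models_st (Kn n) \<psi> \<longleftrightarrow> models_st (Mn n) \<psi>"
proof -
  have sat_iff: "sat (Kn n) \<rho> \<psi> \<longleftrightarrow> sat (Kn n) \<rho>' \<psi>" if "trace_equiv n n \<rho> \<rho>'" for \<rho> \<rho>'
  proof -
    have "trace_equiv n (hs_size \<psi>) \<rho> \<rho>'" using trace_equiv_mono[OF that assms(3)] .
    moreover note trace_equiv_sym[OF this]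
    moreover have "hs_size \<psi> \<le> 2 * n" using assms(3) by simp
    ultimately show ?thesis using sat_transfer[OF assms(2) order_refl] by blast
  qed
  show ?thesis
    unfolding models_st_def sat_Mn
    using init_trace_Kn_equiv_Mn[OF assms(1)] init_trace_Mn_equiv_Kn[OF assms(1)] sat_iff by blast
qed

end
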